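(* Let $D=(D_1,D_2)\in\mathcal{U}(n,s_1^ps_2^q)$, where $D_1\in\mathcal{U}(n,s_1^p)$ consists of $p$ qualitative factors with $s_1$ levels and $D_2\in\mathcal{U}(n,s_2^q)$ consists of $q$ quantitative factors with $s_2$ levels. If $s_2$ is odd, then $\mathrm{QQD}^2(D)\ge LB_{odd}$, where \begin{align*}LB_{odd}=&-\left(\frac{5s_1+1}{4s_1}\right)^p\left(\frac43\right)^q+\frac1n\left(\frac32\right)^{p+q}+\frac{n-1}{n}\left(\frac54\right)^p\left(\frac65\right)^{\frac{p(n-s_1)}{s_1(n-1)}}\left(\frac32\right)^{\frac{q(n-s_2)}{s_2(n-1)}}\prod_{i=1}^{(s_2-1)/2}\left(\frac32-\frac{2i(2s_2-2i)}{4s_2^2}\right)^{\frac{2nq}{s_2(n-1)}};\end{align*} if $s_2$ is even, then $\mathrm{QQD}^2(D)\ge LB_{even}$, where \begin{align*}LB_{even}=&-\left(\frac{5s_1+1}{4s_1}\right)^p\left(\frac43\right)^q+\frac1n\left(\frac32\right)^{p+q}+\frac{n-1}{n}\left(\frac54\right)^p\left(\frac65\right)^{\frac{p(n-s_1)}{s_1(n-1)}}\left(\frac32\right)^{\frac{q(n-s_2)}{s_2(n-1)}}\left(\frac54\right)^{\frac{nq}{s_2(n-1)}}\prod_{i=1}^{(s_2/2)-1}\left(\frac32-\frac{2i(2s_2-2i)}{4s_2^2}\right)^{\frac{2nq}{s_2(n-1)}}.\end{align*}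
   Context: A U-type design in $\mathcal{U}(n,s_1^{p}s_2^{q})$ is an $n\times(p+q)$ matrix whose first $p$ columns each take every value in $\{0,\dots,s_1-1\}$ equally often and whose last $q$ columns each take every value in $\{0,\dots,s_2-1\}$ equally often; the first $p$ columns are qualitative, the last $q$ quantitative. For quantitative columns a level $x$ is transformed to $(2x+1)/(2s_2)\in[0,1]$. Let $\chi=\prod_k\chi_k$, $\chi_k=\{0,\dots,s_1-1\}$ for $k\le p$, $\chi_k=[0,1]$ for $k>p$, and $F$ the uniform distribution on $\chi$. Kernel: $\mathcal{K}(t,z)=\prod_k\mathcal{K}_k(t_k,z_k)$ with $\mathcal{K}_k=(3/2)^{\delta_{t_kz_k}}(5/4)^{1-\delta_{t_kz_k}}$ for $k\le p$ ($\delta$ the Kronecker delta) and $\mathcal{K}_k=\frac32-|t_k-z_k|+|t_k-z_k|^2$ for $k>p$. For $D$ with (transformed) rows $x_1,\dots,x_n$, the squared qualitative-quantitative discrepancy is $\mathrm{QQD}^2(D)=\int_{\chi^2}\mathcal{K}\,dF\,dF-\frac2n\sum_i\int_\chi\mathcal{K}(t,x_i)dF(t)+\frac1{n^2}\sum_{i,j}\mathcal{K}(x_i,x_j)$. Empty products are $1$. *)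

theory Defs
  imports "HOL-Probability.Probability"
begin

text \<open>A design is a function D :: nat => nat => nat, D i k = level of run i (i < n)
  in factor k (k < p + q). Columns k < p are qualitative with s1 levels,
  columns p <= k < p + q are quantitative with s2 levels.\<close>

definition utype :: "nat \<Rightarrow> nat \<Rightarrow> nat \<Rightarrow> nat \<Rightarrow> nat \<Rightarrow> (nat \<Rightarrow> nat \<Rightarrow> nat) \<Rightarrow> bool" where
  "utype n s1 s2 p q D \<longleftrightarrow>
     (\<forall>i<n. \<forall>k<p. D i k < s1) \<and>
     (\<forall>i<n. \<forall>k\<in>{p..<p+q}. D i k < s2) \<and>
     (\<forall>k<p. \<forall>v<s1. \<forall>w<s1. card {i. i < n \<and> D i k = v} = card {i. i < n \<and> D i k = w}) \<and>
     (\<forall>k\<in>{p..<p+q}. \<forall>v<s2. \<forall>w<s2. card {i. i < n \<and> D i k = v} = card {i. i < n \<and> D i k = w})"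

definition coord_measure :: "nat \<Rightarrow> nat \<Rightarrow> nat \<Rightarrow> real measure" where
  "coord_measure s1 p k =
     (if k < p then uniform_count_measure (real ` {..<s1})
      else uniform_measure lborel {0..1})"

definition F_measure :: "nat \<Rightarrow> nat \<Rightarrow> nat \<Rightarrow> (nat \<Rightarrow> real) measure" where
  "F_measure s1 p q = PiM {..<p+q} (coord_measure s1 p)"

definition kernel_k :: "nat \<Rightarrow> nat \<Rightarrow> real \<Rightarrow> real \<Rightarrow> real" where
  "kernel_k p k t z =
     (if k < p then (if t = z then 3/2 else 5/4)
      else 3/2 - \<bar>t - z\<bar> + \<bar>t - z\<bar>^2)"

definition kernel :: "nat \<Rightarrow> nat \<Rightarrow> (nat \<Rightarrow> real) \<Rightarrow> (nat \<Rightarrow> real) \<Rightarrow> real" where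
  "kernel p q t z = (\<Prod>k<p+q. kernel_k p k (t k) (z k))"

definition trow :: "nat \<Rightarrow> nat \<Rightarrow> nat \<Rightarrow> (nat \<Rightarrow> nat \<Rightarrow> nat) \<Rightarrow> nat \<Rightarrow> nat \<Rightarrow> real" where
  "trow s2 p q D i k =
     (if k < p then real (D i k)
      else if k < p + q then (2 * real (D i k) + 1) / (2 * real s2)
      else undefined)"

definition QQD2 :: "nat \<Rightarrow> nat \<Rightarrow> nat \<Rightarrow> nat \<Rightarrow> nat \<Rightarrow> (nat \<Rightarrow> nat \<Rightarrow> nat) \<Rightarrow> real" where
  "QQD2 n s1 s2 p q D =
     (let F = F_measure s1 p q; K = kernel p q; x = trow s2 p q D in
       (\<integral>t. (\<integral>z. K t z \<partial>F) \<partial>F)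
       - 2 / real n * (\<Sum>i<n. \<integral>t. K t (x i) \<partial>F)
       + 1 / (real n)^2 * (\<Sum>i<n. \<Sum>j<n. K (x i) (x j)))"

end

theory Submission
  imports Defs
begin

text \<open>
  Every integral of the kernel against \<open>F\<close> factorises over the coordinates and equals
  \<open>((5s\<^sub>1+1)/(4s\<^sub>1))\<^sup>p (4/3)\<^sup>q\<close>, also when one argument is a design point; together with
  the diagonal terms \<open>K(x\<^sub>i, x\<^sub>i) = (3/2)\<^bsup>p+q\<^esup>\<close> this leaves only the off-diagonal sum of
  kernel values, which AM-GM bounds below by \<open>n(n-1)\<close> times the exponential of the mean of
  \<open>ln K(x\<^sub>i, x\<^sub>j)\<close>. As \<open>ln K\<close> is a sum over the columns and every column is balanced,
  this mean is computed from averages over pairs of levels. For a quantitative column the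
  average only depends on the level differences, which the reflection \<open>d \<mapsto> s\<^sub>2 - d\<close> folds
  onto \<open>1 \<le> d \<le> s\<^sub>2/2\<close>; the middle level of an even \<open>s\<^sub>2\<close> contributes the factor \<open>5/4\<close>.
\<close>

lemma card_mul_exp_mean_ln_le_sum:
  fixes f :: "'a \<Rightarrow> real"
  assumes "finite P" and "P \<noteq> {}" and pos: "\<And>x. x \<in> P \<Longrightarrow> f x > 0"
  shows "real (card P) * exp ((\<Sum>x\<in>P. ln (f x)) / real (card P)) \<le> (\<Sum>x\<in>P. f x)"
proof -
  define N where "N = real (card P)"
  define S where "S = (\<Sum>x\<in>P. ln (f x))"
  define G where "G = exp (S / N)"
  have N: "N > 0" using assms(1,2) by (simp add: N_def card_gt_0_iff)
  have G: "G > 0" by (simp add: G_def)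
  have "ln (f x) - S / N \<le> f x / G - 1" if "x \<in> P" for x
    using ln_le_minus_one[of "f x / G"] pos[OF that] G by (simp add: ln_div G_def)
  then have "(\<Sum>x\<in>P. ln (f x) - S / N) \<le> (\<Sum>x\<in>P. f x / G - 1)"
    by (rule sum_mono)
  then have "S - N * (S / N) \<le> (\<Sum>x\<in>P. f x) / G - N"
    by (simp add: sum_subtractf S_def N_def sum_divide_distrib)
  then have "N * G \<le> (\<Sum>x\<in>P. f x)"
    using N G by (simp add: field_simps)
  then show ?thesis by (simp add: N_def S_def G_def)
qed

lemma sum_comp_balanced:
  fixes a :: "nat \<Rightarrow> nat" and g :: "nat \<Rightarrow> real"
  assumes "\<forall>i<n. a i < s" and "\<forall>v<s. card {i. i < n \<and> a i = v} = c"
  shows "(\<Sum>i<n. g (a i)) = real c * (\<Sum>v<s. g v)"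
proof -
  have "(\<Sum>i<n. g (a i)) = (\<Sum>v<s. \<Sum>i\<in>{i\<in>{..<n}. a i = v}. g (a i))"
    by (rule sum.group[symmetric]) (use assms(1) in auto)
  also have "\<dots> = (\<Sum>v<s. real c * g v)"
  proof (rule sum.cong[OF refl])
    fix v assume "v \<in> {..<s}"
    moreover have "{i\<in>{..<n}. a i = v} = {i. i < n \<and> a i = v}" by auto
    ultimately show "(\<Sum>i\<in>{i\<in>{..<n}. a i = v}. g (a i)) = real c * g v"
      using assms(2) by simp
  qed
  finally show ?thesis by (simp add: sum_distrib_left)
qed

lemma double_sum_comp_balanced:
  fixes a :: "nat \<Rightarrow> nat" and g :: "nat \<Rightarrow> nat \<Rightarrow> real"
  assumes range: "\<forall>i<n. a i < s"
    and balanced: "\<forall>v<s. \<forall>w<s. card {i. i < n \<and> a i = v} = card {i. i < n \<and> a i = w}"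
  shows "(\<Sum>i<n. \<Sum>j<n. g (a i) (a j)) = (real n / real s)^2 * (\<Sum>v<s. \<Sum>w<s. g v w)"
proof (cases "s = 0")
  case True
  then have "n = 0" using range by auto
  then show ?thesis by simp
next
  case False
  define c where "c = card {i. i < n \<and> a i = 0}"
  have c: "\<forall>v<s. card {i. i < n \<and> a i = v} = c"
    using balanced False unfolding c_def by blast
  have n: "real n = real c * real s"
    using sum_comp_balanced[OF range c, of "\<lambda>_. 1"] by simp
  have "(\<Sum>i<n. \<Sum>j<n. g (a i) (a j)) = (\<Sum>i<n. real c * (\<Sum>w<s. g (a i) w))"
    by (rule sum.cong[OF refl]) (rule sum_comp_balanced[OF range c])
  also have "\<dots> = real c * (\<Sum>i<n. \<Sum>w<s. g (a i) w)"
    by (simp add: sum_distrib_left)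
  also have "(\<Sum>i<n. \<Sum>w<s. g (a i) w) = real c * (\<Sum>v<s. \<Sum>w<s. g v w)"
    by (rule sum_comp_balanced[OF range c])
  finally show ?thesis
    using False by (simp add: n power2_eq_square)
qed

definition off_diagonal :: "nat \<Rightarrow> (nat \<times> nat) set" where
  "off_diagonal n = (SIGMA i:{..<n}. {..<n} - {i})"

lemma sum_off_diagonal:
  fixes h :: "nat \<Rightarrow> nat \<Rightarrow> 'a::ab_group_add"
  shows "(\<Sum>(i, j)\<in>off_diagonal n. h i j) = (\<Sum>i<n. \<Sum>j<n. h i j) - (\<Sum>i<n. h i i)"
proof -
  have "(\<Sum>(i, j)\<in>off_diagonal n. h i j) = (\<Sum>i<n. (\<Sum>j<n. h i j) - h i i)"
    unfolding off_diagonal_def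
    by (subst sum.Sigma[symmetric]) (auto intro!: sum.cong simp: sum_diff1)
  then show ?thesis by (simp add: sum_subtractf)
qed

lemma card_off_diagonal: "card (off_diagonal n) = n * (n - 1)"
  unfolding off_diagonal_def by (simp add: card_SigmaI)

lemma sum_abs_diff_symmetric:
  fixes G :: "real \<Rightarrow> real"
  assumes "v < s" and sym: "\<And>d. d \<le> s \<Longrightarrow> G (real s - real d) = G (real d)"
  shows "(\<Sum>w<s. G \<bar>real v - real w\<bar>) = (\<Sum>d<s. G (real d))"
proof -
  have below: "(\<Sum>w<v. G \<bar>real v - real w\<bar>) = (\<Sum>d=s-v..<s. G (real d))"
  proof (rule sum.reindex_bij_witness[of _ "\<lambda>d. d + v - s" "\<lambda>w. w + s - v"])
    fix w assume "w \<in> {..<v}"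
    then have "real (w + s - v) = real s - real (v - w)" and "\<bar>real v - real w\<bar> = real (v - w)"
      using assms(1) by (simp_all add: of_nat_diff)
    then show "G (real (w + s - v)) = G \<bar>real v - real w\<bar>"
      using sym[of "v - w"] by simp
  qed (use assms(1) in auto)
  have above: "(\<Sum>w=v..<s. G \<bar>real v - real w\<bar>) = (\<Sum>d<s-v. G (real d))"
  proof (rule sum.reindex_bij_witness[of _ "\<lambda>d. d + v" "\<lambda>w. w - v"])
    fix w assume "w \<in> {v..<s}"
    then show "G (real (w - v)) = G \<bar>real v - real w\<bar>" by (simp add: of_nat_diff)
  qed auto
  have "(\<Sum>w<s. G \<bar>real v - real w\<bar>) = (\<Sum>w<v. G \<bar>real v - real w\<bar>) + (\<Sum>w=v..<s. G \<bar>real v - real w\<bar>)"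
    using sum.atLeastLessThan_concat[where m = 0 and n = v and p = s and g = "\<lambda>w. G \<bar>real v - real w\<bar>"]
      assms(1) unfolding atLeast0LessThan by simp
  also have "\<dots> = (\<Sum>d<s. G (real d))"
    using sum.atLeastLessThan_concat[where m = 0 and n = "s - v" and p = s and g = "\<lambda>d. G (real d)"]
    unfolding below above atLeast0LessThan by simp
  finally show ?thesis .
qed

lemma sum_symmetric_odd:
  fixes g :: "nat \<Rightarrow> real"
  assumes s: "s = 2 * m + 1" and sym: "\<And>d. d \<le> s \<Longrightarrow> g (s - d) = g d"
  shows "(\<Sum>d=1..<s. g d) = 2 * (\<Sum>i=1..m. g i)"
proof -
  have "{1..<s} = {1..m} \<union> {m+1..2*m}" using s by auto
  then have "(\<Sum>d=1..<s. g d) = (\<Sum>i=1..m. g i) + (\<Sum>d=m+1..2*m. g d)"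
    by (simp add: sum.union_disjoint)
  also have "(\<Sum>d=m+1..2*m. g d) = (\<Sum>i=1..m. g i)"
    by (rule sum.reindex_bij_witness[of _ "\<lambda>i. s - i" "\<lambda>d. s - d"]) (use s sym in auto)
  finally show ?thesis by simp
qed

lemma sum_symmetric_even:
  fixes g :: "nat \<Rightarrow> real"
  assumes s: "s = 2 * m" and "m > 0" and sym: "\<And>d. d \<le> s \<Longrightarrow> g (s - d) = g d"
  shows "(\<Sum>d=1..<s. g d) = g m + 2 * (\<Sum>i=1..m-1. g i)"
proof -
  have "{1..<s} = {1..m-1} \<union> {m} \<union> {m+1..2*m-1}" using s \<open>m > 0\<close> by auto
  then have "(\<Sum>d=1..<s. g d) = (\<Sum>i=1..m-1. g i) + g m + (\<Sum>d=m+1..2*m-1. g d)"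
    using \<open>m > 0\<close> by (simp add: sum.union_disjoint)
  also have "(\<Sum>d=m+1..2*m-1. g d) = (\<Sum>i=1..m-1. g i)"
    by (rule sum.reindex_bij_witness[of _ "\<lambda>i. s - i" "\<lambda>d. s - d"]) (use s sym in auto)
  finally show ?thesis by simp
qed

lemma sum_if_eq_const:
  fixes \<alpha> \<beta> :: real
  assumes "c \<in> A" and "finite A"
  shows "(\<Sum>v\<in>A. if v = c then \<alpha> else \<beta>) = \<alpha> + (real (card A) - 1) * \<beta>"
proof -
  have "(\<Sum>v\<in>A. if v = c then \<alpha> else \<beta>) = \<alpha> + (\<Sum>v\<in>A - {c}. if v = c then \<alpha> else \<beta>)"
    using assms by (simp add: sum.remove)
  also have "(\<Sum>v\<in>A - {c}. if v = c then \<alpha> else \<beta>) = (\<Sum>v\<in>A - {c}. \<beta>)"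
    by (rule sum.cong) auto
  also have "(\<Sum>v\<in>A - {c}. \<beta>) = (real (card A) - 1) * \<beta>"
  proof -
    have "card A \<ge> 1" using assms by (simp add: Suc_le_eq card_gt_0_iff) blast
    then show ?thesis using assms by (simp add: of_nat_diff)
  qed
  finally show ?thesis .
qed

lemma sum_lessThan_add_if:
  "(\<Sum>k<p+q. if k < p then a else b) = of_nat p * a + of_nat q * (b :: 'a :: comm_semiring_1)"
  by (induction q) (simp_all add: algebra_simps)

lemma prod_lessThan_add_if:
  "(\<Prod>k<p+q. if k < p then a else b) = a ^ p * (b :: 'a :: comm_monoid_mult) ^ q"
  by (induction q) (simp_all add: mult_ac)

lemma quadratic_pos: "0 < 3/2 - a + (a :: real)^2"
proof -
  have "0 \<le> (a - 1/2)^2" by simp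
  then show ?thesis by (simp add: power2_eq_square algebra_simps)
qed

lemma exp_mult_ln: "b > 0 \<Longrightarrow> exp (e * ln b) = (b :: real) powr e"
  by (simp add: powr_def)

abbreviation unif01 :: "real measure" where
  "unif01 \<equiv> uniform_measure lborel {0..1}"

lemma prob_space_unif01: "prob_space unif01"
  by (rule prob_space_uniform_measure) auto

lemma integral_unif01:
  fixes g :: "real \<Rightarrow> real"
  assumes "continuous_on UNIV g"
  shows "(\<integral>x. g x \<partial>unif01) = integral {0..1} g"
proof -
  have "unif01 = density lborel (\<lambda>x. ennreal (indicator {0..1} x))"
    unfolding uniform_measure_def by (simp add: ennreal_indicator divide_ennreal_def)
  then have "(\<integral>x. g x \<partial>unif01) = (\<integral>x. indicator {0..1::real} x *\<^sub>R g x \<partial>lborel)"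
    using borel_measurable_continuous_onI[OF assms] by (simp add: integral_density)
  also have "\<dots> = (LINT x : {0..1} | lborel. g x)"
    by (simp add: set_lebesgue_integral_def)
  also have "\<dots> = integral {0..1} g"
    by (intro set_borel_integral_eq_integral(2) borel_integrable_atLeastAtMost'
        continuous_on_subset[OF assms]) auto
  finally show ?thesis .
qed

lemma integrable_unif01:
  fixes g :: "real \<Rightarrow> real"
  assumes "g \<in> borel_measurable borel" and "\<And>x. x \<in> {0..1} \<Longrightarrow> \<bar>g x\<bar> \<le> B"
  shows "integrable unif01 g"
proof -
  interpret prob_space unif01 by (rule prob_space_unif01)
  show ?thesis
  proof (rule integrable_const_bound[where B = B])
    show "AE x in unif01. norm (g x) \<le> B"
      using assms(2) by (intro AE_uniform_measureI AE_I2) auto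
    show "g \<in> borel_measurable unif01"
      using assms(1) measurable_cong_sets[of unif01 borel] by simp
  qed
qed

lemma integral_quant_kernel_01:
  fixes x :: real
  assumes "0 \<le> x" "x \<le> 1"
  shows "integral {0..1} (\<lambda>t. 3/2 - \<bar>t - x\<bar> + \<bar>t - x\<bar>^2) = 4/3"
proof -
  let ?f = "\<lambda>t::real. 3/2 - \<bar>t - x\<bar> + \<bar>t - x\<bar>^2"
  let ?F = "\<lambda>t::real. 3/2 * t + (x - t)^2/2 - (x - t)^3/3"
  let ?G = "\<lambda>t::real. 3/2 * t - (t - x)^2/2 + (t - x)^3/3"
  have "((\<lambda>t. 3/2 - (x - t) + (x - t)^2) has_integral (?F x - ?F 0)) {0..x}"
    by (intro fundamental_theorem_of_calculus[OF assms(1)]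
        has_real_derivative_iff_has_vector_derivative[THEN iffD1])
       (auto intro!: derivative_eq_intros simp: field_simps power2_eq_square)
  then have left: "(?f has_integral (?F x - ?F 0)) {0..x}"
    by (rule has_integral_eq[rotated]) (auto simp: abs_if)
  have "((\<lambda>t. 3/2 - (t - x) + (t - x)^2) has_integral (?G 1 - ?G x)) {x..1}"
    by (intro fundamental_theorem_of_calculus[OF assms(2)]
        has_real_derivative_iff_has_vector_derivative[THEN iffD1])
       (auto intro!: derivative_eq_intros simp: field_simps power2_eq_square)
  then have right: "(?f has_integral (?G 1 - ?G x)) {x..1}"
    by (rule has_integral_eq[rotated]) (auto simp: abs_if)
  have "(?f has_integral ((?F x - ?F 0) + (?G 1 - ?G x))) {0..1}"
    by (rule has_integral_combine[OF assms left right])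
  moreover have "(?F x - ?F 0) + (?G 1 - ?G x) = 4/3"
    by (simp add: field_simps power2_eq_square power3_eq_cube; algebra)
  ultimately show ?thesis
    by (metis integral_unique)
qed

definition coord_support :: "nat \<Rightarrow> nat \<Rightarrow> nat \<Rightarrow> real set" where
  "coord_support s1 p k = (if k < p then real ` {..<s1} else {0..1})"

definition kernel_k_mean :: "nat \<Rightarrow> nat \<Rightarrow> nat \<Rightarrow> real" where
  "kernel_k_mean s1 p k = (if k < p then (5 * real s1 + 1) / (4 * real s1) else 4/3)"

lemma prob_space_coord_measure: "s1 \<ge> 1 \<Longrightarrow> prob_space (coord_measure s1 p k)"
  unfolding coord_measure_def
  by (auto intro!: prob_space_uniform_count_measure prob_space_unif01 simp: lessThan_empty_iff)

lemma product_sigma_finite_coord_measure: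
  "s1 \<ge> 1 \<Longrightarrow> product_sigma_finite (coord_measure s1 p)"
  unfolding product_sigma_finite_def
  using prob_space_coord_measure prob_space_imp_sigma_finite by blast

text \<open>The space of \<open>unif01\<close> is all of \<open>\<real>\<close>, so coordinates lie in their support only
  almost everywhere.\<close>

lemma AE_coord_support: "AE y in coord_measure s1 p k. y \<in> coord_support s1 p k"
proof (cases "k < p")
  case True
  then show ?thesis
    by (intro AE_I2) (simp add: coord_measure_def coord_support_def space_uniform_count_measure)
next
  case False
  have "AE y in unif01. y \<in> {0..1}"
    by (rule AE_uniform_measureI) auto
  then show ?thesis
    unfolding coord_measure_def coord_support_def if_not_P[OF False] .
qed

lemma kernel_k_commute: "kernel_k p k t z = kernel_k p k z t"
  unfolding kernel_k_def by (auto simp: abs_minus_commute)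

lemma integrable_kernel_k:
  assumes "s1 \<ge> 1"
  shows "integrable (coord_measure s1 p k) (\<lambda>t. kernel_k p k t z)"
proof (cases "k < p")
  case True
  then show ?thesis
    by (simp add: coord_measure_def uniform_count_measure_def integrable_point_measure_finite)
next
  case False
  have "integrable unif01 (\<lambda>t. 3/2 - \<bar>t - z\<bar> + \<bar>t - z\<bar>^2)"
  proof (rule integrable_unif01)
    fix t :: real assume "t \<in> {0..1}"
    then have "\<bar>t - z\<bar>^2 \<le> (1 + \<bar>z\<bar>)^2" by (intro power_mono) auto
    then show "\<bar>3/2 - \<bar>t - z\<bar> + \<bar>t - z\<bar>^2\<bar> \<le> 3/2 + (1 + \<bar>z\<bar>)^2"
      using quadratic_pos[of "\<bar>t - z\<bar>"] by simp
  qed measurable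
  then show ?thesis using False by (simp add: coord_measure_def kernel_k_def)
qed

lemma integral_kernel_k:
  assumes "s1 \<ge> 1" and "z \<in> coord_support s1 p k"
  shows "(\<integral>t. kernel_k p k t z \<partial>coord_measure s1 p k) = kernel_k_mean s1 p k"
proof (cases "k < p")
  case True
  have "(\<integral>t. kernel_k p k t z \<partial>coord_measure s1 p k)
      = (\<Sum>v\<in>real ` {..<s1}. if v = z then 3/2 else 5/4) / real s1"
    using True by (simp add: coord_measure_def integral_uniform_count_measure kernel_k_def card_image)
  also have "\<dots> = (5 * real s1 + 1) / (4 * real s1)"
    using True assms by (subst sum_if_eq_const) (auto simp: coord_support_def card_image field_simps)
  finally show ?thesis using True by (simp add: kernel_k_mean_def)
next
  case False
  then have "(\<integral>t. kernel_k p k t z \<partial>coord_measure s1 p k)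
      = integral {0..1} (\<lambda>t. 3/2 - \<bar>t - z\<bar> + \<bar>t - z\<bar>^2)"
    by (simp add: coord_measure_def kernel_k_def integral_unif01 continuous_intros)
  also have "\<dots> = 4/3"
    using False assms(2) by (intro integral_quant_kernel_01) (auto simp: coord_support_def)
  finally show ?thesis using False by (simp add: kernel_k_mean_def)
qed

lemma borel_measurable_kernel_k_integral:
  "(\<lambda>y. \<integral>z. kernel_k p k y z \<partial>coord_measure s1 p k) \<in> borel_measurable (coord_measure s1 p k)"
proof (cases "k < p")
  case True
  then show ?thesis by (simp add: coord_measure_def uniform_count_measure_def)
next
  case False
  interpret sigma_finite_measure unif01
    using prob_space_unif01 prob_space_imp_sigma_finite by blast
  have "sets (borel \<Otimes>\<^sub>M unif01) = sets (borel \<Otimes>\<^sub>M (borel :: real measure))"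
    by (rule sets_pair_measure_cong) auto
  moreover have "(\<lambda>(y, z). 3/2 - \<bar>y - z\<bar> + \<bar>y - z\<bar>^2 :: real)
      \<in> borel_measurable (borel \<Otimes>\<^sub>M (borel :: real measure))"
    by measurable
  ultimately have "(\<lambda>(y, z). 3/2 - \<bar>y - z\<bar> + \<bar>y - z\<bar>^2 :: real)
      \<in> borel_measurable (borel \<Otimes>\<^sub>M unif01)"
    using measurable_cong_sets by blast
  then show ?thesis
    using False borel_measurable_lebesgue_integral measurable_cong_sets[of unif01 borel]
    by (simp add: coord_measure_def kernel_k_def)
qed

lemma AE_integral_kernel_k_eq_mean:
  assumes "s1 \<ge> 1"
  shows "AE y in coord_measure s1 p k.
           (\<integral>z. kernel_k p k y z \<partial>coord_measure s1 p k) = kernel_k_mean s1 p k"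
proof (rule eventually_mono[OF AE_coord_support])
  fix y assume "y \<in> coord_support s1 p k"
  then show "(\<integral>z. kernel_k p k y z \<partial>coord_measure s1 p k) = kernel_k_mean s1 p k"
    unfolding kernel_k_commute[of p k y] by (rule integral_kernel_k[OF assms])
qed

lemma integrable_kernel_k_integral:
  assumes "s1 \<ge> 1"
  shows "integrable (coord_measure s1 p k) (\<lambda>y. \<integral>z. kernel_k p k y z \<partial>coord_measure s1 p k)"
proof (rule integrable_cong_AE_imp[OF _ borel_measurable_kernel_k_integral])
  show "integrable (coord_measure s1 p k) (\<lambda>_. kernel_k_mean s1 p k)"
    using prob_space_coord_measure[OF assms] by (simp add: prob_space_def finite_measure.integrable_const)
  show "AE y in coord_measure s1 p k.
          kernel_k_mean s1 p k = (\<integral>z. kernel_k p k y z \<partial>coord_measure s1 p k)"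
    by (rule eventually_mono[OF AE_integral_kernel_k_eq_mean[OF assms]]) simp
qed

lemma integral_kernel_k_integral:
  assumes "s1 \<ge> 1"
  shows "(\<integral>y. \<integral>z. kernel_k p k y z \<partial>coord_measure s1 p k \<partial>coord_measure s1 p k) = kernel_k_mean s1 p k"
proof -
  have "(\<integral>y. \<integral>z. kernel_k p k y z \<partial>coord_measure s1 p k \<partial>coord_measure s1 p k)
      = (\<integral>y. kernel_k_mean s1 p k \<partial>coord_measure s1 p k)"
    by (rule integral_cong_AE[OF borel_measurable_kernel_k_integral borel_measurable_const
          AE_integral_kernel_k_eq_mean[OF assms]])
  then show ?thesis
    using prob_space.prob_space[OF prob_space_coord_measure[OF assms]] by simp
qed

lemma prod_kernel_k_mean:
  "(\<Prod>k<p+q. kernel_k_mean s1 p k) = ((5 * real s1 + 1) / (4 * real s1))^p * (4/3)^q"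
  unfolding kernel_k_mean_def by (rule prod_lessThan_add_if)

lemma integral_kernel:
  assumes "s1 \<ge> 1" and "\<forall>k<p+q. z k \<in> coord_support s1 p k"
  shows "(\<integral>t. kernel p q t z \<partial>F_measure s1 p q) = ((5 * real s1 + 1) / (4 * real s1))^p * (4/3)^q"
proof -
  have "(\<integral>t. kernel p q t z \<partial>F_measure s1 p q)
      = (\<Prod>k<p+q. \<integral>t. kernel_k p k t (z k) \<partial>coord_measure s1 p k)"
    unfolding kernel_def F_measure_def
    by (rule product_sigma_finite.product_integral_prod[OF
          product_sigma_finite_coord_measure[OF assms(1)] finite_lessThan integrable_kernel_k[OF assms(1)]])
  also have "\<dots> = (\<Prod>k<p+q. kernel_k_mean s1 p k)"
    using assms by (intro prod.cong refl integral_kernel_k) auto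
  finally show ?thesis by (simp only: prod_kernel_k_mean)
qed

lemma integral_integral_kernel:
  assumes "s1 \<ge> 1"
  shows "(\<integral>t. \<integral>z. kernel p q t z \<partial>F_measure s1 p q \<partial>F_measure s1 p q)
       = ((5 * real s1 + 1) / (4 * real s1))^p * (4/3)^q"
proof -
  have inner: "(\<integral>z. kernel p q t z \<partial>F_measure s1 p q)
      = (\<Prod>k<p+q. \<integral>z. kernel_k p k (t k) z \<partial>coord_measure s1 p k)" for t
  proof -
    have "integrable (coord_measure s1 p k) (\<lambda>z. kernel_k p k y z)" for k y
      using integrable_kernel_k[OF assms, of p k y] unfolding kernel_k_commute[of p k _ y] .
    then show ?thesis
      unfolding kernel_def F_measure_def
      by (rule product_sigma_finite.product_integral_prod[OF
            product_sigma_finite_coord_measure[OF assms] finite_lessThan])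
  qed
  have "(\<integral>t. \<integral>z. kernel p q t z \<partial>F_measure s1 p q \<partial>F_measure s1 p q)
      = (\<Prod>k<p+q. \<integral>y. \<integral>z. kernel_k p k y z \<partial>coord_measure s1 p k \<partial>coord_measure s1 p k)"
    unfolding inner unfolding F_measure_def
    by (rule product_sigma_finite.product_integral_prod[OF product_sigma_finite_coord_measure[OF assms]
          finite_lessThan integrable_kernel_k_integral[OF assms]])
  also have "\<dots> = (\<Prod>k<p+q. kernel_k_mean s1 p k)"
    using integral_kernel_k_integral[OF assms] by simp
  finally show ?thesis by (simp only: prod_kernel_k_mean)
qed

lemma kernel_k_pos: "0 < kernel_k p k t z"
  unfolding kernel_k_def using quadratic_pos[of "\<bar>t - z\<bar>"] by auto

lemma kernel_pos: "0 < kernel p q t z"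
  unfolding kernel_def by (intro prod_pos) (simp add: kernel_k_pos)

lemma kernel_diag: "kernel p q t t = (3/2)^(p+q)"
proof -
  have "kernel p q t t = (\<Prod>k<p+q. 3/2)"
    unfolding kernel_def by (intro prod.cong refl) (simp add: kernel_k_def)
  then show ?thesis by simp
qed

lemma ln_kernel: "ln (kernel p q t z) = (\<Sum>k<p+q. ln (kernel_k p k (t k) (z k)))"
  unfolding kernel_def using kernel_k_pos by (intro ln_prod) (auto simp: less_le)

text \<open>Two quantitative levels at distance \<open>d\<close> are mapped to points at distance \<open>d / s\<close>,
  where the kernel is \<open>3/2 - d/s + (d/s)\<^sup>2\<close>.\<close>

definition ln_quant_kernel :: "nat \<Rightarrow> real \<Rightarrow> real" where
  "ln_quant_kernel s d = ln (3/2 - d / real s + (d / real s)^2)"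

lemma ln_quant_kernel_reflect: "s > 0 \<Longrightarrow> ln_quant_kernel s (real s - d) = ln_quant_kernel s d"
  unfolding ln_quant_kernel_def by (rule arg_cong[where f = ln]) (simp add: field_simps power2_eq_square)

lemma ln_kernel_k_quant_levels:
  assumes "\<not> k < p" and "s > 0"
  shows "ln (kernel_k p k ((2 * real v + 1) / (2 * real s)) ((2 * real w + 1) / (2 * real s)))
       = ln_quant_kernel s \<bar>real v - real w\<bar>"
proof -
  have "(2 * real v + 1) / (2 * real s) - (2 * real w + 1) / (2 * real s) = (real v - real w) / real s"
    using assms(2) by (simp add: field_simps)
  then show ?thesis
    using assms by (simp add: kernel_k_def ln_quant_kernel_def power_divide)
qed

lemma sum_ln_kernel_k_qual_levels:
  assumes "k < p"
  shows "(\<Sum>v<s. \<Sum>w<s. ln (kernel_k p k (real v) (real w)))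
       = real s * (ln (3/2) + (real s - 1) * ln (5/4))"
proof -
  have "(\<Sum>w<s. ln (kernel_k p k (real v) (real w))) = ln (3/2) + (real s - 1) * ln (5/4)"
    if "v < s" for v
  proof -
    have "(\<Sum>w<s. ln (kernel_k p k (real v) (real w))) = (\<Sum>w<s. if w = v then ln (3/2) else ln (5/4))"
      using assms by (intro sum.cong refl) (simp add: kernel_k_def)
    also have "\<dots> = ln (3/2) + (real (card {..<s}) - 1) * ln (5/4)"
      using that by (intro sum_if_eq_const) auto
    finally show ?thesis by simp
  qed
  then have "(\<Sum>v<s. \<Sum>w<s. ln (kernel_k p k (real v) (real w)))
      = (\<Sum>v<s. ln (3/2) + (real s - 1) * ln (5/4))"
    by (rule sum.cong[OF refl]) simp
  then show ?thesis by simp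
qed

lemma sum_ln_kernel_k_quant_levels:
  assumes "\<not> k < p" and "s > 0"
  shows "(\<Sum>v<s. \<Sum>w<s. ln (kernel_k p k ((2 * real v + 1) / (2 * real s)) ((2 * real w + 1) / (2 * real s))))
       = real s * (\<Sum>d<s. ln_quant_kernel s (real d))"
proof -
  have "(\<Sum>w<s. ln (kernel_k p k ((2 * real v + 1) / (2 * real s)) ((2 * real w + 1) / (2 * real s))))
      = (\<Sum>d<s. ln_quant_kernel s (real d))" if "v < s" for v
  proof -
    have "(\<Sum>w<s. ln (kernel_k p k ((2 * real v + 1) / (2 * real s)) ((2 * real w + 1) / (2 * real s))))
        = (\<Sum>w<s. ln_quant_kernel s \<bar>real v - real w\<bar>)"
      using assms by (intro sum.cong refl ln_kernel_k_quant_levels)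
    also have "\<dots> = (\<Sum>d<s. ln_quant_kernel s (real d))"
      using that assms(2) by (intro sum_abs_diff_symmetric ln_quant_kernel_reflect)
    finally show ?thesis .
  qed
  then have "(\<Sum>v<s. \<Sum>w<s. ln (kernel_k p k ((2 * real v + 1) / (2 * real s)) ((2 * real w + 1) / (2 * real s))))
      = (\<Sum>v<s. \<Sum>d<s. ln_quant_kernel s (real d))"
    by (rule sum.cong[OF refl]) simp
  then show ?thesis by simp
qed

lemma utype_qual_column:
  assumes "utype n s1 s2 p q D" and "k < p"
  shows "(\<forall>i<n. D i k < s1) \<and>
    (\<forall>v<s1. \<forall>w<s1. card {i. i < n \<and> D i k = v} = card {i. i < n \<and> D i k = w})"
  using assms unfolding utype_def by blast

lemma utype_quant_column:
  assumes "utype n s1 s2 p q D" and "p \<le> k" and "k < p + q"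
  shows "(\<forall>i<n. D i k < s2) \<and>
    (\<forall>v<s2. \<forall>w<s2. card {i. i < n \<and> D i k = v} = card {i. i < n \<and> D i k = w})"
proof -
  have "k \<in> {p..<p+q}" using assms(2,3) by simp
  then show ?thesis using assms(1) unfolding utype_def by blast
qed

lemma trow_in_coord_support:
  assumes "utype n s1 s2 p q D" and "i < n" and "k < p + q"
  shows "trow s2 p q D i k \<in> coord_support s1 p k"
proof (cases "k < p")
  case True
  then have "D i k < s1" using utype_qual_column[OF assms(1) True] assms(2) by blast
  then show ?thesis using True by (simp add: trow_def coord_support_def)
next
  case False
  then have "D i k < s2" using utype_quant_column[OF assms(1) leI[OF False] assms(3)] assms(2) by blast
  then have "(2 * real (D i k) + 1) / (2 * real s2) \<in> {0..1}"
    by (simp add: divide_le_eq_1)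
  then show ?thesis using False assms(3) by (simp add: trow_def coord_support_def)
qed

lemma sum_ln_kernel_k_column:
  assumes "utype n s1 s2 p q D" and "k < p + q" and "s2 > 0"
  shows "(\<Sum>i<n. \<Sum>j<n. ln (kernel_k p k (trow s2 p q D i k) (trow s2 p q D j k)))
       = (real n)^2 * (if k < p then (ln (3/2) + (real s1 - 1) * ln (5/4)) / real s1
                       else (\<Sum>d<s2. ln_quant_kernel s2 (real d)) / real s2)"
proof (cases "k < p")
  case True
  have "(\<Sum>i<n. \<Sum>j<n. ln (kernel_k p k (trow s2 p q D i k) (trow s2 p q D j k)))
      = (\<Sum>i<n. \<Sum>j<n. ln (kernel_k p k (real (D i k)) (real (D j k))))"
    using True by (simp add: trow_def)
  also have "\<dots> = (real n / real s1)^2 * (\<Sum>v<s1. \<Sum>w<s1. ln (kernel_k p k (real v) (real w)))"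
    using utype_qual_column[OF assms(1) True]
    by (intro double_sum_comp_balanced[where g = "\<lambda>v w. ln (kernel_k p k (real v) (real w))"]; blast)
  finally show ?thesis
    using True by (simp add: sum_ln_kernel_k_qual_levels power_divide power2_eq_square)
next
  case False
  have "(\<Sum>i<n. \<Sum>j<n. ln (kernel_k p k (trow s2 p q D i k) (trow s2 p q D j k)))
      = (\<Sum>i<n. \<Sum>j<n. ln (kernel_k p k ((2 * real (D i k) + 1) / (2 * real s2))
                                          ((2 * real (D j k) + 1) / (2 * real s2))))"
    using False assms(2) by (simp add: trow_def)
  also have "\<dots> = (real n / real s2)^2 * (\<Sum>v<s2. \<Sum>w<s2.
      ln (kernel_k p k ((2 * real v + 1) / (2 * real s2)) ((2 * real w + 1) / (2 * real s2))))"
    using utype_quant_column[OF assms(1) leI[OF False] assms(2)]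
    by (intro double_sum_comp_balanced[where g = "\<lambda>v w. ln (kernel_k p k ((2 * real v + 1) / (2 * real s2))
          ((2 * real w + 1) / (2 * real s2)))"]; blast)
  finally show ?thesis
    using False assms(3) by (simp add: sum_ln_kernel_k_quant_levels power_divide power2_eq_square)
qed

text \<open>The mean of \<open>ln K(x\<^sub>i, x\<^sub>j)\<close> over the pairs \<open>i \<noteq> j\<close>: by balance of the columns
  it is the same for every U-type design.\<close>

definition mean_ln_kernel_off_diagonal :: "nat \<Rightarrow> nat \<Rightarrow> nat \<Rightarrow> nat \<Rightarrow> nat \<Rightarrow> real" where
  "mean_ln_kernel_off_diagonal n s1 s2 p q =
     (real n * (real p * (ln (3/2) + (real s1 - 1) * ln (5/4)) / real s1
                + real q * (\<Sum>d<s2. ln_quant_kernel s2 (real d)) / real s2)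
      - real (p + q) * ln (3/2)) / (real n - 1)"

lemma sum_off_diagonal_ln_kernel:
  assumes "utype n s1 s2 p q D" and "s2 > 0" and "n \<ge> 2"
  shows "(\<Sum>(i, j)\<in>off_diagonal n. ln (kernel p q (trow s2 p q D i) (trow s2 p q D j)))
       = real n * (real n - 1) * mean_ln_kernel_off_diagonal n s1 s2 p q"
proof -
  define x where "x = trow s2 p q D"
  define a where "a = (ln (3/2) + (real s1 - 1) * ln (5/4)) / real s1"
  define b where "b = (\<Sum>d<s2. ln_quant_kernel s2 (real d)) / real s2"
  have "(\<Sum>i<n. \<Sum>j<n. ln (kernel p q (x i) (x j)))
      = (\<Sum>k<p+q. \<Sum>i<n. \<Sum>j<n. ln (kernel_k p k (x i k) (x j k)))"
    unfolding ln_kernel by (simp add: sum.swap[of _ "{..<n}" "{..<p+q}"])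
  also have "\<dots> = (\<Sum>k<p+q. (real n)^2 * (if k < p then a else b))"
    unfolding x_def a_def b_def
    by (rule sum.cong[OF refl]) (simp add: sum_ln_kernel_k_column[OF assms(1) _ assms(2)])
  also have "\<dots> = (real n)^2 * (real p * a + real q * b)"
    by (simp add: sum_distrib_left[symmetric] sum_lessThan_add_if)
  finally have "(\<Sum>i<n. \<Sum>j<n. ln (kernel p q (x i) (x j))) = (real n)^2 * (real p * a + real q * b)" .
  moreover have "(\<Sum>i<n. ln (kernel p q (x i) (x i))) = real n * (real (p + q) * ln (3/2))"
    by (simp add: kernel_diag ln_realpow)
  moreover have "real n * (real n - 1) * mean_ln_kernel_off_diagonal n s1 s2 p q
      = (real n)^2 * (real p * a + real q * b) - real n * (real (p + q) * ln (3/2))"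
    using assms(3) unfolding mean_ln_kernel_off_diagonal_def a_def b_def
    by (simp add: field_simps power2_eq_square)
  ultimately show ?thesis
    unfolding x_def[symmetric] sum_off_diagonal[of "\<lambda>i j. ln (kernel p q (x i) (x j))"] by simp
qed

lemma QQD2_eq_off_diagonal:
  assumes "utype n s1 s2 p q D" and "s1 \<ge> 1" and "n > 0"
  shows "QQD2 n s1 s2 p q D = - (((5 * real s1 + 1) / (4 * real s1))^p * (4/3)^q)
      + 1 / real n * (3/2)^(p+q)
      + (\<Sum>(i, j)\<in>off_diagonal n. kernel p q (trow s2 p q D i) (trow s2 p q D j)) / (real n)^2"
proof -
  define x where "x = trow s2 p q D"
  define A where "A = ((5 * real s1 + 1) / (4 * real s1))^p * (4/3 :: real)^q"
  have "(\<Sum>i<n. \<integral>t. kernel p q t (x i) \<partial>F_measure s1 p q) = (\<Sum>i<n. A)"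
    unfolding x_def A_def
    using assms(1) by (intro sum.cong refl integral_kernel[OF assms(2)] allI impI trow_in_coord_support) auto
  moreover have "(\<Sum>i<n. \<Sum>j<n. kernel p q (x i) (x j))
      = real n * (3/2)^(p+q) + (\<Sum>(i, j)\<in>off_diagonal n. kernel p q (x i) (x j))"
    unfolding sum_off_diagonal[of "\<lambda>i j. kernel p q (x i) (x j)"] by (simp add: kernel_diag)
  ultimately show ?thesis
    using assms(3) integral_integral_kernel[OF assms(2), of p q]
    unfolding QQD2_def Let_def x_def[symmetric] A_def[symmetric]
    by (simp add: field_simps power2_eq_square)
qed

lemma QQD2_ge_exp_mean_ln_kernel:
  assumes "utype n s1 s2 p q D" and "s1 \<ge> 1" and "s2 \<ge> 1" and "n \<ge> 2"
  shows "QQD2 n s1 s2 p q D \<ge> - (((5 * real s1 + 1) / (4 * real s1))^p * (4/3)^q)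
      + 1 / real n * (3/2)^(p+q)
      + (real n - 1) / real n * exp (mean_ln_kernel_off_diagonal n s1 s2 p q)"
proof -
  define K where "K = (\<lambda>(i, j). kernel p q (trow s2 p q D i) (trow s2 p q D j))"
  have "(0, 1) \<in> off_diagonal n" using assms(4) by (simp add: off_diagonal_def)
  then have "real (card (off_diagonal n)) * exp ((\<Sum>ij\<in>off_diagonal n. ln (K ij)) / real (card (off_diagonal n)))
      \<le> (\<Sum>ij\<in>off_diagonal n. K ij)"
    by (intro card_mul_exp_mean_ln_le_sum) (auto simp: off_diagonal_def K_def kernel_pos)
  moreover have "(\<Sum>ij\<in>off_diagonal n. ln (K ij)) = real n * (real n - 1) * mean_ln_kernel_off_diagonal n s1 s2 p q"
    unfolding K_def using sum_off_diagonal_ln_kernel[OF assms(1) _ assms(4)] assms(3)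
    by (simp add: case_prod_unfold)
  moreover have "real (card (off_diagonal n)) = real n * (real n - 1)"
    using assms(4) by (simp add: card_off_diagonal of_nat_diff)
  ultimately have "real n * (real n - 1) * exp (mean_ln_kernel_off_diagonal n s1 s2 p q)
      \<le> (\<Sum>ij\<in>off_diagonal n. K ij)"
    using assms(4) by simp
  then have "real n * (real n - 1) * exp (mean_ln_kernel_off_diagonal n s1 s2 p q) / (real n)^2
      \<le> (\<Sum>ij\<in>off_diagonal n. K ij) / (real n)^2"
    by (rule divide_right_mono) simp
  moreover have "real n * (real n - 1) * exp (mean_ln_kernel_off_diagonal n s1 s2 p q) / (real n)^2
      = (real n - 1) / real n * exp (mean_ln_kernel_off_diagonal n s1 s2 p q)"
    using assms(4) by (simp add: power2_eq_square)
  ultimately have "(real n - 1) / real n * exp (mean_ln_kernel_off_diagonal n s1 s2 p q)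
      \<le> (\<Sum>ij\<in>off_diagonal n. K ij) / (real n)^2"
    by simp
  then show ?thesis
    using QQD2_eq_off_diagonal[OF assms(1,2)] assms(4) unfolding K_def by simp
qed

lemma mean_ln_kernel_off_diagonal_eq:
  assumes "n \<ge> 2" and "s1 \<ge> 1" and "s2 \<ge> 1"
  shows "mean_ln_kernel_off_diagonal n s1 s2 p q
       = real p * ln (5/4)
         + real p * (real n - real s1) / (real s1 * (real n - 1)) * ln (6/5)
         + real q * (real n - real s2) / (real s2 * (real n - 1)) * ln (3/2)
         + real n * real q / (real s2 * (real n - 1)) * (\<Sum>d=1..<s2. ln_quant_kernel s2 (real d))"
proof -
  have sum_from_1: "(\<Sum>d<s2. ln_quant_kernel s2 (real d)) = ln (3/2) + (\<Sum>d=1..<s2. ln_quant_kernel s2 (real d))"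
    using assms(3) by (simp add: atLeast0LessThan[symmetric] sum.atLeast_Suc_lessThan ln_quant_kernel_def)
  have ln_6_5: "ln (6/5 :: real) = ln (3/2) - ln (5/4)"
    using ln_div[of "3/2" "5/4"] by simp
  define m where "m = real n - 1"
  have n: "real n = m + 1" and "m \<noteq> 0"
    using assms(1) by (simp_all add: m_def)
  show ?thesis
    using \<open>m \<noteq> 0\<close> assms(2,3) unfolding mean_ln_kernel_off_diagonal_def sum_from_1 ln_6_5 n
    by (simp add: field_simps)
qed

lemma exp_mult_sum_ln_quant_kernel:
  assumes "s > 0" and "finite I"
  shows "exp (e * (\<Sum>i\<in>I. ln_quant_kernel s (real i)))
       = (\<Prod>i\<in>I. (3/2 - 2 * real i * (2 * real s - 2 * real i) / (4 * (real s)^2)) powr e)"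
proof -
  have base: "3/2 - 2 * real i * (2 * real s - 2 * real i) / (4 * (real s)^2)
      = 3/2 - real i / real s + (real i / real s)^2" for i
    using assms(1) by (simp add: field_simps power2_eq_square)
  have "exp (e * (\<Sum>i\<in>I. ln_quant_kernel s (real i))) = (\<Prod>i\<in>I. exp (e * ln_quant_kernel s (real i)))"
    using assms(2) by (simp add: sum_distrib_left exp_sum)
  also have "\<dots> = (\<Prod>i\<in>I. (3/2 - real i / real s + (real i / real s)^2) powr e)"
    unfolding ln_quant_kernel_def by (simp add: exp_mult_ln quadratic_pos)
  finally show ?thesis by (simp only: base)
qed

lemma exp_mean_ln_kernel_off_diagonal_odd:
  assumes "n \<ge> 2" and "s1 \<ge> 1" and "odd s2"
  shows "exp (mean_ln_kernel_off_diagonal n s1 s2 p q)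
       = (5/4) ^ p
         * (6/5) powr (real p * (real n - real s1) / (real s1 * (real n - 1)))
         * (3/2) powr (real q * (real n - real s2) / (real s2 * (real n - 1)))
         * (\<Prod>i=1..(s2 - 1) div 2.
              (3/2 - 2 * real i * (2 * real s2 - 2 * real i) / (4 * (real s2)^2))
                powr (2 * real n * real q / (real s2 * (real n - 1))))"
proof -
  define m where "m = (s2 - 1) div 2"
  define e1 where "e1 = real p * (real n - real s1) / (real s1 * (real n - 1))"
  define e2 where "e2 = real q * (real n - real s2) / (real s2 * (real n - 1))"
  define e3 where "e3 = 2 * real n * real q / (real s2 * (real n - 1))"
  have s2: "s2 = 2 * m + 1" using assms(3) unfolding m_def by presburger
  then have "s2 > 0" by simp
  have "(\<Sum>d=1..<s2. ln_quant_kernel s2 (real d)) = 2 * (\<Sum>i=1..m. ln_quant_kernel s2 (real i))"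
    using s2 by (rule sum_symmetric_odd)
      (use ln_quant_kernel_reflect[OF \<open>s2 > 0\<close>] in \<open>simp add: of_nat_diff\<close>)
  then have "mean_ln_kernel_off_diagonal n s1 s2 p q
      = real p * ln (5/4) + e1 * ln (6/5) + e2 * ln (3/2) + e3 * (\<Sum>i=1..m. ln_quant_kernel s2 (real i))"
    using assms(1,2) \<open>s2 > 0\<close> unfolding e1_def e2_def e3_def
    by (simp add: mean_ln_kernel_off_diagonal_eq)
  then show ?thesis
    unfolding m_def[symmetric] e1_def[symmetric] e2_def[symmetric] e3_def[symmetric]
    by (simp add: exp_add exp_of_nat_mult exp_mult_ln exp_mult_sum_ln_quant_kernel[OF \<open>s2 > 0\<close>])
qed

lemma exp_mean_ln_kernel_off_diagonal_even:
  assumes "n \<ge> 2" and "s1 \<ge> 1" and "s2 \<ge> 1" and "even s2"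
  shows "exp (mean_ln_kernel_off_diagonal n s1 s2 p q)
       = (5/4) ^ p
         * (6/5) powr (real p * (real n - real s1) / (real s1 * (real n - 1)))
         * (3/2) powr (real q * (real n - real s2) / (real s2 * (real n - 1)))
         * (5/4) powr (real n * real q / (real s2 * (real n - 1)))
         * (\<Prod>i=1..s2 div 2 - 1.
              (3/2 - 2 * real i * (2 * real s2 - 2 * real i) / (4 * (real s2)^2))
                powr (2 * real n * real q / (real s2 * (real n - 1))))"
proof -
  define m where "m = s2 div 2"
  define e1 where "e1 = real p * (real n - real s1) / (real s1 * (real n - 1))"
  define e2 where "e2 = real q * (real n - real s2) / (real s2 * (real n - 1))"
  define e3 where "e3 = real n * real q / (real s2 * (real n - 1))"
  define e4 where "e4 = 2 * real n * real q / (real s2 * (real n - 1))"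
  have s2: "s2 = 2 * m" and "m > 0" using assms(3,4) unfolding m_def by auto
  then have "s2 > 0" by simp
  have "ln_quant_kernel s2 (real m) = ln (5/4)"
    using \<open>m > 0\<close> unfolding ln_quant_kernel_def s2 by (simp add: field_simps power2_eq_square)
  moreover have "(\<Sum>d=1..<s2. ln_quant_kernel s2 (real d))
      = ln_quant_kernel s2 (real m) + 2 * (\<Sum>i=1..m - 1. ln_quant_kernel s2 (real i))"
    using s2 \<open>m > 0\<close> by (rule sum_symmetric_even)
      (use ln_quant_kernel_reflect[OF \<open>s2 > 0\<close>] in \<open>simp add: of_nat_diff\<close>)
  ultimately have "mean_ln_kernel_off_diagonal n s1 s2 p q
      = real p * ln (5/4) + e1 * ln (6/5) + e2 * ln (3/2) + e3 * ln (5/4)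
        + e4 * (\<Sum>i=1..m - 1. ln_quant_kernel s2 (real i))"
    using assms(1,2,3) unfolding e1_def e2_def e3_def e4_def
    by (simp add: mean_ln_kernel_off_diagonal_eq algebra_simps)
  then show ?thesis
    unfolding m_def[symmetric] e1_def[symmetric] e2_def[symmetric] e3_def[symmetric] e4_def[symmetric]
    by (simp add: exp_add exp_of_nat_mult exp_mult_ln exp_mult_sum_ln_quant_kernel[OF \<open>s2 > 0\<close>])
qed

theorem corollary2:
  fixes n s1 s2 p q :: nat and D :: "nat \<Rightarrow> nat \<Rightarrow> nat"
  assumes "n \<ge> 2" and "s1 \<ge> 1" and "s2 \<ge> 1"
    and "utype n s1 s2 p q D"
  shows
   "(odd s2 \<longrightarrow> QQD2 n s1 s2 p q D \<ge>
       - (((5 * real s1 + 1) / (4 * real s1)) ^ p * (4/3) ^ q)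
       + 1 / real n * (3/2) ^ (p + q)
       + (real n - 1) / real n * (5/4) ^ p
         * (6/5) powr (real p * (real n - real s1) / (real s1 * (real n - 1)))
         * (3/2) powr (real q * (real n - real s2) / (real s2 * (real n - 1)))
         * (\<Prod>i=1..(s2 - 1) div 2.
              (3/2 - 2 * real i * (2 * real s2 - 2 * real i) / (4 * (real s2)^2))
                powr (2 * real n * real q / (real s2 * (real n - 1)))))
    \<and>
    (even s2 \<longrightarrow> QQD2 n s1 s2 p q D \<ge>
       - (((5 * real s1 + 1) / (4 * real s1)) ^ p * (4/3) ^ q)
       + 1 / real n * (3/2) ^ (p + q)
       + (real n - 1) / real n * (5/4) ^ p
         * (6/5) powr (real p * (real n - real s1) / (real s1 * (real n - 1)))
         * (3/2) powr (real q * (real n - real s2) / (real s2 * (real n - 1)))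
         * (5/4) powr (real n * real q / (real s2 * (real n - 1)))
         * (\<Prod>i=1..s2 div 2 - 1.
              (3/2 - 2 * real i * (2 * real s2 - 2 * real i) / (4 * (real s2)^2))
                powr (2 * real n * real q / (real s2 * (real n - 1)))))"
  using QQD2_ge_exp_mean_ln_kernel[OF assms(4,2,3,1)]
    exp_mean_ln_kernel_off_diagonal_odd[OF assms(1,2), of s2 p q, symmetric]
    exp_mean_ln_kernel_off_diagonal_even[OF assms(1,2,3), of p q, symmetric]
  by (simp add: mult.assoc)

end
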